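(* Assume $a>1$. Let $f:\mathbb R\to\mathbb R$ be defined by $f(z)=\mu z+\lambda\ln\Big[\dfrac{\lambda(e^{\frac{a}{\lambda}(1-z)}-1)}{1-z}\Big]$ for $z\neq1$ and $f(1)=\mu+\lambda\ln a$. Then: (1) $f(z)=\mu z+\lambda\ln w(z)$ for all $z\in\mathbb R$, where $w(z)=a+\sum_{n=2}^\infty \frac{a^n(1-z)^{n-1}}{n!\,\lambda^{n-1}}$; in particular $f\in C^\infty(\mathbb R)$. (2) $f$ is convex, and the graph of $f$ intersects the graph of $k(x)=\mu x$ at exactly one point, whose abscissa $H$ satisfies $H\in(1,1+\lambda)$.
   Context: Constants $\mu\in\mathbb R$, $a>0$, $\lambda>0$ are fixed. *)

theory Defs
  imports "HOL-Analysis.Analysis"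
begin

definition f_prop :: "real \<Rightarrow> real \<Rightarrow> real \<Rightarrow> real \<Rightarrow> real" where
  "f_prop mu a lam z =
     (if z = 1 then mu + lam * ln a
      else mu * z + lam * ln (lam * (exp ((a / lam) * (1 - z)) - 1) / (1 - z)))"

text \<open>The n-th term (n >= 2) of the series defining w, reindexed from 0: term m corresponds to n = m + 2.\<close>
definition w_term :: "real \<Rightarrow> real \<Rightarrow> real \<Rightarrow> nat \<Rightarrow> real" where
  "w_term a lam z m =
     a ^ (m + 2) * (1 - z) ^ (m + 1) / (fact (m + 2) * lam ^ (m + 1))"

definition w_prop :: "real \<Rightarrow> real \<Rightarrow> real \<Rightarrow> real" where
  "w_prop a lam z = a + (\<Sum>m. w_term a lam z m)"

definition C_infinity :: "(real \<Rightarrow> real) \<Rightarrow> bool" where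
  "C_infinity g \<longleftrightarrow> (\<forall>n x. ((deriv ^^ n) g) differentiable (at x))"

end

theory Submission
  imports Defs "HOL-Complex_Analysis.Complex_Analysis"
begin

text \<open>With \<open>c = a / \<lambda>\<close> one has \<open>f z = \<mu> z + \<lambda> ln (a \<cdot> exprel (c (1 - z)))\<close>, where
  \<open>exprel x = (e\<^sup>x - 1) / x = \<Sum>\<^sub>n x\<^sup>n / (n + 1)!\<close> is entire and positive on the real line;
  this gives the series representation and, via the holomorphic extension, smoothness.
  Convexity of \<open>f\<close> is log-convexity of \<open>exprel\<close>, which reduces to
  \<open>x\<^sup>2 e\<^sup>x \<le> (e\<^sup>x - 1)\<^sup>2\<close>, i.e. \<open>|x| \<le> |2 sinh (x/2)|\<close>.
  Finally \<open>f H = \<mu> H\<close> means \<open>exprel (c (1 - H)) = 1 / a\<close>; as \<open>exprel\<close> is strictly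
  increasing with \<open>exprel 0 = 1\<close> and \<open>exprel (-a) < 1 / a\<close>, this has exactly one solution,
  and it lies in \<open>(-a, 0)\<close>, i.e. \<open>1 < H < 1 + \<lambda>\<close>.\<close>

definition exprel_coeff :: "nat \<Rightarrow> 'a::real_normed_field" where
  "exprel_coeff n = inverse (fact (Suc n))"

definition exprel_deriv :: "nat \<Rightarrow> 'a::{real_normed_field,banach} \<Rightarrow> 'a" where
  "exprel_deriv k x = (\<Sum>n. (diffs ^^ k) exprel_coeff n * x ^ n)"

abbreviation exprel :: "'a::{real_normed_field,banach} \<Rightarrow> 'a" where
  "exprel \<equiv> exprel_deriv 0"

lemma summable_exprel_coeff:
  "summable (\<lambda>n. exprel_coeff n * (x::'a::{real_normed_field,banach}) ^ n)"
proof (rule summable_norm_cancel, rule summable_comparison_test[OF _ summable_exp[of "norm x"]])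
  show "\<exists>N. \<forall>n\<ge>N. norm (norm (exprel_coeff n * x ^ n)) \<le> inverse (fact n) * norm x ^ n"
  proof (intro exI allI impI)
    fix n :: nat
    have "norm (exprel_coeff n * x ^ n) = inverse (fact (Suc n)) * norm x ^ n"
      by (simp add: exprel_coeff_def norm_mult norm_power norm_inverse norm_fact del: fact_Suc)
    also have "\<dots> \<le> inverse (fact n) * norm x ^ n"
      by (intro mult_right_mono) (auto simp: fact_mono divide_simps)
    finally show "norm (norm (exprel_coeff n * x ^ n)) \<le> inverse (fact n) * norm x ^ n"
      by simp
  qed
qed

lemma summable_exprel_deriv:
  "summable (\<lambda>n. (diffs ^^ k) exprel_coeff n * (x::'a::{real_normed_field,banach}) ^ n)"
proof (induction k arbitrary: x)
  case 0
  show ?case using summable_exprel_coeff by simp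
next
  case (Suc k)
  show ?case using termdiff_converges_all[OF Suc.IH] by simp
qed

lemma has_field_derivative_exprel_deriv:
  "(exprel_deriv k has_field_derivative exprel_deriv (Suc k) x) (at x)"
  unfolding exprel_deriv_def[abs_def]
  using termdiffs_strong_converges_everywhere[OF summable_exprel_deriv] by simp

lemma holomorphic_on_exprel [holomorphic_intros]:
  assumes "f holomorphic_on A"
  shows "(\<lambda>z. exprel (f z) :: complex) holomorphic_on A"
proof -
  have "(exprel :: complex \<Rightarrow> complex) holomorphic_on UNIV"
    unfolding holomorphic_on_def field_differentiable_def
    using has_field_derivative_at_within[OF has_field_derivative_exprel_deriv] by blast
  then show ?thesis
    using holomorphic_on_compose_gen[OF assms] by (simp add: o_def)
qed

lemma exprel_of_real: "exprel (of_real x :: 'a::{real_normed_field,banach}) = of_real (exprel x)"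
  unfolding exprel_deriv_def funpow_0
  by (subst suminf_of_real[OF summable_exprel_coeff]) (simp add: exprel_coeff_def of_real_inverse)

lemma exprel_mult_self: "x * exprel x = exp x - (1::'a::{real_normed_field,banach})"
proof -
  have exp_series: "exp x = (\<Sum>n. inverse (fact n) * x ^ n)"
    using exp_converges[of x] by (simp add: sums_iff scaleR_conv_of_real nonzero_of_real_inverse)
  have "x * exprel x = (\<Sum>n. x * (exprel_coeff n * x ^ n))"
    unfolding exprel_deriv_def by (simp add: suminf_mult[OF summable_exprel_coeff])
  also have "\<dots> = (\<Sum>n. inverse (fact (Suc n)) * x ^ Suc n)"
    by (simp add: exprel_coeff_def mult_ac)
  also have "\<dots> = exp x - 1"
    using suminf_split_head[OF summable_exp[of x]] exp_series by simp
  finally show ?thesis .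
qed

text \<open>Differentiating \<open>x * exprel x = exp x - 1\<close> k + 1 times.\<close>
lemma exprel_deriv_ode:
  "of_nat (Suc k) * exprel_deriv k x + x * exprel_deriv (Suc k) x = exp (x::real)"
proof (induction k arbitrary: x)
  case 0
  have "((\<lambda>x. x * exprel x) has_real_derivative exprel x + x * exprel_deriv 1 x) (at x)"
    using DERIV_mult'[OF DERIV_ident has_field_derivative_exprel_deriv] by (simp add: add.commute)
  moreover have "((\<lambda>x. x * exprel x) has_real_derivative exp x) (at x)"
    unfolding exprel_mult_self by (auto intro!: derivative_eq_intros)
  ultimately show ?case using DERIV_unique by fastforce
next
  case (Suc k)
  have "((\<lambda>x. of_nat (Suc k) * exprel_deriv k x + x * exprel_deriv (Suc k) x)
          has_real_derivative of_nat (Suc (Suc k)) * exprel_deriv (Suc k) x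
            + x * exprel_deriv (Suc (Suc k)) x) (at x)"
    by (auto intro!: derivative_eq_intros has_field_derivative_exprel_deriv simp: algebra_simps)
  moreover have "((\<lambda>x. of_nat (Suc k) * exprel_deriv k x + x * exprel_deriv (Suc k) x)
          has_real_derivative exp x) (at x)"
    unfolding Suc.IH by (rule DERIV_exp)
  ultimately show ?case using DERIV_unique by blast
qed

lemma exprel_deriv_at_0: "exprel_deriv k (0::real) = 1 / of_nat (Suc k)"
  using exprel_deriv_ode[of k 0] by (simp add: field_simps)

lemma exprel_eq: "x \<noteq> 0 \<Longrightarrow> exprel x = (exp x - 1) / (x::real)"
  using exprel_mult_self[of x] by (simp add: field_simps)

lemma exprel_pos: "exprel x > (0::real)"
proof (cases "x = 0")
  case True
  then show ?thesis by (simp add: exprel_deriv_at_0)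
next
  case False
  then show ?thesis
    unfolding exprel_eq[OF False] by (cases "x > 0") (auto simp: divide_pos_pos divide_neg_neg)
qed

lemma exprel_deriv_1_pos: "exprel_deriv 1 x > (0::real)"
proof (cases "x = 0")
  case True
  then show ?thesis by (simp add: exprel_deriv_at_0)
next
  case False
  have "exp x * (1 - x) < exp x * exp (-x)"
    using exp_minus_greater[of x] False by simp
  then have numerator: "x * exp x - exp x + 1 > 0"
    by (simp add: exp_minus algebra_simps)
  have "exprel x + x * exprel_deriv 1 x = exp x"
    using exprel_deriv_ode[of 0 x] by simp
  then have "exprel_deriv 1 x = (x * exp x - exp x + 1) / x^2"
    using exprel_eq[OF False] False by (simp add: field_simps power2_eq_square)
  then show ?thesis using numerator False by simp
qed

lemma strict_mono_exprel: "strict_mono (exprel :: real \<Rightarrow> real)"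
proof (rule strict_monoI)
  fix x y :: real
  assume "x < y"
  then show "exprel x < exprel y"
  proof (rule DERIV_pos_imp_increasing)
    fix z :: real
    have "(exprel has_real_derivative exprel_deriv 1 z) (at z)"
      using has_field_derivative_exprel_deriv[of 0 z] by simp
    then show "\<exists>d. (exprel has_real_derivative d) (at z) \<and> d > 0"
      using exprel_deriv_1_pos by blast
  qed
qed

lemma exp_minus_1_squared_ge: "x^2 * exp x \<le> (exp x - 1)^2" for x :: real
proof -
  define s where "s = exp (x/2)"
  have "\<bar>x/2\<bar> \<le> \<bar>(s - inverse s) / 2\<bar>"
    unfolding s_def by (rule real_le_abs_sinh)
  then have "x^2 \<le> (s - inverse s)^2"
    by (simp add: abs_le_square_iff power_divide)
  then have "x^2 * s^2 \<le> (s - inverse s)^2 * s^2"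
    by (simp add: mult_right_mono)
  also have "(s - inverse s)^2 * s^2 = (s^2 - 1)^2"
    by (simp add: s_def field_simps power2_eq_square)
  finally show ?thesis
    by (simp add: s_def power2_eq_square flip: exp_add)
qed

text \<open>Log-convexity of \<open>exprel\<close>; after multiplying by \<open>x^4\<close> and eliminating the
  derivatives through \<open>exprel_deriv_ode\<close> it becomes \<open>exp_minus_1_squared_ge\<close>.\<close>
lemma exprel_deriv_1_squared_le: "(exprel_deriv 1 x)^2 \<le> exprel x * exprel_deriv 2 (x::real)"
proof (cases "x = 0")
  case True
  then show ?thesis by (simp add: exprel_deriv_at_0 power2_eq_square)
next
  case False
  define E where "E = exp x"
  have P: "x * exprel x = E - 1"
    using exprel_mult_self[of x] by (simp add: E_def)
  have Q: "x^2 * exprel_deriv 1 x = x * E - (E - 1)"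
  proof -
    have "x * (exprel x + x * exprel_deriv 1 x) = x * E"
      using exprel_deriv_ode[of 0 x] by (simp add: E_def distrib_left)
    then show ?thesis using P by (simp add: algebra_simps power2_eq_square)
  qed
  have R: "x^3 * exprel_deriv 2 x = x^2 * E - 2 * (x * E - (E - 1))"
  proof -
    have "x^2 * (2 * exprel_deriv 1 x + x * exprel_deriv 2 x) = x^2 * E"
      using exprel_deriv_ode[of 1 x] by (simp add: E_def numeral_2_eq_2 distrib_left)
    then have "2 * (x^2 * exprel_deriv 1 x) + x^3 * exprel_deriv 2 x = x^2 * E"
      by (simp add: algebra_simps power2_eq_square power3_eq_cube)
    then show ?thesis using Q by simp
  qed
  have "x^4 * (exprel x * exprel_deriv 2 x - (exprel_deriv 1 x)^2)
      = (x * exprel x) * (x^3 * exprel_deriv 2 x) - (x^2 * exprel_deriv 1 x)^2"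
    by (simp add: algebra_simps power2_eq_square power3_eq_cube power4_eq_xxxx)
  also have "\<dots> = (E - 1)^2 - x^2 * E"
    unfolding P Q R by (simp add: algebra_simps power2_eq_square)
  finally have "x^4 * (exprel x * exprel_deriv 2 x - (exprel_deriv 1 x)^2) \<ge> 0"
    using exp_minus_1_squared_ge[of x] by (simp add: E_def)
  then show ?thesis
    using False by (simp add: zero_le_mult_iff)
qed

lemma convex_on_ln_exprel: "convex_on UNIV (\<lambda>x::real. ln (exprel x))"
proof (rule convex_on_realI[where f' = "\<lambda>x. exprel_deriv 1 x / exprel x"])
  show "connected (UNIV :: real set)" by simp
next
  fix x :: real
  show "((\<lambda>x. ln (exprel x)) has_real_derivative exprel_deriv 1 x / exprel x) (at x)"
    using exprel_pos[of x]
    by (auto intro!: derivative_eq_intros has_field_derivative_exprel_deriv)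
next
  fix x y :: real
  assume "x \<le> y"
  then show "exprel_deriv 1 x / exprel x \<le> exprel_deriv 1 y / exprel y"
  proof (rule DERIV_nonneg_imp_nondecreasing)
    fix z :: real
    have "((\<lambda>z. exprel_deriv 1 z / exprel z) has_real_derivative
           (exprel_deriv 2 z * exprel z - exprel_deriv 1 z * exprel_deriv 1 z)
             / (exprel z * exprel z)) (at z)"
      using exprel_pos[of z]
      by (auto intro!: DERIV_divide has_field_derivative_exprel_deriv simp: numeral_2_eq_2)
    moreover have "(exprel_deriv 2 z * exprel z - exprel_deriv 1 z * exprel_deriv 1 z)
             / (exprel z * exprel z) \<ge> 0"
      using exprel_deriv_1_squared_le[of z] by (simp add: power2_eq_square mult.commute)
    ultimately show "\<exists>d. ((\<lambda>z. exprel_deriv 1 z / exprel z) has_real_derivative d) (at z) \<and> d \<ge> 0"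
      by blast
  qed
qed

lemma exprel_attains:
  fixes b :: real
  assumes "0 < b" "b < 1"
  shows "\<exists>v\<in>{-1/b<..<0}. exprel v = b"
proof -
  have "exprel (-1/b) = b * (1 - exp (-1/b))"
    using assms by (simp add: exprel_eq field_simps)
  also have "\<dots> < b"
    using assms by simp
  finally have lower: "exprel (-1/b) < b" .
  have "continuous_on {-1/b..0} (exprel :: real \<Rightarrow> real)"
    using DERIV_isCont[OF has_field_derivative_exprel_deriv]
    by (auto intro: continuous_at_imp_continuous_on)
  then obtain v where v: "v \<in> {-1/b..0}" "exprel v = b"
    using IVT'[of exprel "-1/b" b 0] lower assms by (auto simp: exprel_deriv_at_0)
  moreover have "v \<noteq> 0" "v \<noteq> -1/b"
    using v lower assms by (auto simp: exprel_deriv_at_0)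
  ultimately show ?thesis by auto
qed

lemma convex_on_affine_comp:
  fixes g :: "real \<Rightarrow> real"
  assumes "convex_on UNIV g"
  shows "convex_on UNIV (\<lambda>x. g (b * x + d))"
proof (rule convex_onI)
  fix t x y :: real
  assume t: "t > 0" "t < 1"
  have "b * ((1 - t) *\<^sub>R x + t *\<^sub>R y) + d = (1 - t) *\<^sub>R (b * x + d) + t *\<^sub>R (b * y + d)"
    by (simp add: algebra_simps)
  then show "g (b * ((1 - t) *\<^sub>R x + t *\<^sub>R y) + d) \<le> (1 - t) * g (b * x + d) + t * g (b * y + d)"
    using convex_onD[OF assms, of t "b * x + d" "b * y + d"] t by simp
qed simp

lemma has_real_derivative_holomorphic_extension:
  assumes "open S" and "F holomorphic_on S" and "\<And>x. complex_of_real x \<in> S"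
    and F_real: "\<And>x. F (of_real x) = of_real (h x)"
  shows "(h has_real_derivative deriv h x) (at x)"
    and "deriv F (of_real x) = of_real (deriv h x)"
proof -
  define D where "D = deriv F (of_real x)"
  have "(F has_field_derivative D) (at (of_real x))"
    unfolding D_def using assms by (intro holomorphic_derivI) auto
  then have "((\<lambda>t. F (of_real t)) has_vector_derivative D) (at x)"
    by (rule has_vector_derivative_real_field)
  then have D: "((\<lambda>t. complex_of_real (h t)) has_vector_derivative D) (at x)"
    by (simp add: F_real)
  have h_deriv: "(h has_real_derivative Re D) (at x)"
    using has_field_derivative_Re[OF D] by simp
  have "((\<lambda>t. 0::real) has_real_derivative Im D) (at x)"
    using has_field_derivative_Im[OF D] by simp
  then have "Im D = 0"
    using DERIV_const DERIV_unique by blast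
  moreover have "deriv h x = Re D"
    using h_deriv by (rule DERIV_imp_deriv)
  ultimately show "(h has_real_derivative deriv h x) (at x)" "deriv F (of_real x) = of_real (deriv h x)"
    using h_deriv by (auto simp: D_def complex_eq_iff)
qed

text \<open>Each higher complex derivative of \<open>F\<close> is again a holomorphic extension, namely of the
  corresponding real derivative of \<open>h\<close>.\<close>
lemma C_infinity_holomorphic_extension:
  assumes S: "open S" and F: "F holomorphic_on S" and real_in_S: "\<And>x. complex_of_real x \<in> S"
    and F_real: "\<And>x. F (of_real x) = of_real (h x)"
  shows "C_infinity h"
proof -
  note higher = holomorphic_higher_deriv[OF F S]
  have extension: "(deriv ^^ n) F (of_real x) = of_real ((deriv ^^ n) h x)" for n x
  proof (induction n arbitrary: x)
    case 0
    then show ?case using F_real by simp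
  next
    case (Suc n)
    show ?case
      using has_real_derivative_holomorphic_extension(2)[OF S higher real_in_S Suc.IH] by simp
  qed
  show ?thesis
    unfolding C_infinity_def real_differentiable_def
    using has_real_derivative_holomorphic_extension(1)[OF S higher real_in_S extension] by blast
qed

lemma w_prop_eq:
  assumes "lam > 0"
  shows "summable (w_term a lam z)" and "w_prop a lam z = a * exprel (a / lam * (1 - z))"
proof -
  define u where "u = a / lam * (1 - z)"
  have w_term_eq: "w_term a lam z = (\<lambda>m. a * (exprel_coeff (Suc m) * u ^ Suc m))"
  proof
    fix m
    have u_pow: "u ^ Suc m = a ^ Suc m * (1 - z) ^ Suc m / lam ^ Suc m"
      by (simp only: u_def power_mult_distrib power_divide) simp
    have a_pow: "a ^ (m + 2) = a * a ^ Suc m"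
      by simp
    have fact_eq: "fact (m + 2) = (fact (Suc (Suc m)) :: real)"
      by (simp del: fact_Suc)
    show "w_term a lam z m = a * (exprel_coeff (Suc m) * u ^ Suc m)"
      unfolding w_term_def u_pow a_pow fact_eq exprel_coeff_def using assms
      by (simp add: field_simps del: fact_Suc)
  qed
  have tail: "summable (\<lambda>m. exprel_coeff (Suc m) * u ^ Suc m)"
    using summable_exprel_coeff[of u] by (subst summable_Suc_iff)
  then show "summable (w_term a lam z)"
    unfolding w_term_eq by (rule summable_mult)
  have tail_sum: "(\<Sum>m. exprel_coeff (Suc m) * u ^ Suc m) = exprel u - 1"
    using suminf_split_head[OF summable_exprel_coeff[of u]]
    by (simp add: exprel_deriv_def exprel_coeff_def)
  show "w_prop a lam z = a * exprel u"
    unfolding w_prop_def w_term_eq suminf_mult[OF tail] tail_sum by (simp add: algebra_simps)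
qed

lemma f_prop_eq:
  assumes "a > 0" "lam > 0"
  shows "f_prop mu a lam z = mu * z + lam * ln (a * exprel (a / lam * (1 - z)))"
proof (cases "z = 1")
  case True
  then show ?thesis by (simp add: f_prop_def exprel_deriv_at_0)
next
  case False
  define u where "u = a / lam * (1 - z)"
  have "u \<noteq> 0" using False assms by (simp add: u_def)
  then have "lam * (exp u - 1) / (1 - z) = a * exprel u"
    using False assms by (simp add: exprel_eq u_def field_simps)
  then show ?thesis
    using False unfolding f_prop_def u_def by simp
qed

lemma C_infinity_f_prop:
  assumes "a > 0" "lam > 0"
  shows "C_infinity (f_prop mu a lam)"
proof -
  define W where "W s = of_real a * exprel (of_real (a / lam) * (1 - s))" for s :: complex
  define S where "S = W -` {s. 0 < Re s}"
  have W_real: "W (of_real x) = of_real (a * exprel (a / lam * (1 - x)))" for x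
    unfolding W_def by (simp flip: exprel_of_real)
  have W_hol: "W holomorphic_on A" for A
    unfolding W_def by (intro holomorphic_intros)
  show ?thesis
  proof (rule C_infinity_holomorphic_extension)
    have "continuous_on UNIV W"
      by (rule holomorphic_on_imp_continuous_on[OF W_hol])
    then show "open S"
      unfolding S_def vimage_def by (auto intro!: open_Collect_less continuous_intros)
    show "(\<lambda>s. of_real mu * s + of_real lam * Ln (W s)) holomorphic_on S"
      using W_hol by (intro holomorphic_intros) (auto simp: S_def complex_nonpos_Reals_iff)
    show "complex_of_real x \<in> S" for x
      unfolding S_def using exprel_pos assms by (simp add: W_real)
    show "of_real mu * of_real x + of_real lam * Ln (W (of_real x)) = of_real (f_prop mu a lam x)" for x
    proof -
      have pos: "a * exprel (a / lam * (1 - x)) > 0"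
        using exprel_pos assms by simp
      show ?thesis
        unfolding W_real Ln_of_real[OF pos] f_prop_eq[OF assms] by simp
    qed
  qed
qed

lemma convex_on_f_prop:
  assumes "a > 0" "lam > 0"
  shows "convex_on UNIV (f_prop mu a lam)"
proof -
  have "f_prop mu a lam z = (mu * z + 0) + lam * (ln a + ln (exprel (- (a / lam) * z + a / lam)))"
    for z
  proof -
    have "- (a / lam) * z + a / lam = a / lam * (1 - z)"
      by (simp add: right_diff_distrib)
    then show ?thesis
      using assms exprel_pos[of "a / lam * (1 - z)"] by (simp add: f_prop_eq ln_mult)
  qed
  then have "f_prop mu a lam = (\<lambda>z. (mu * z + 0) + lam * (ln a + ln (exprel (- (a / lam) * z + a / lam))))"
    by (rule ext)
  moreover have "convex_on UNIV (\<lambda>z. mu * z + 0)"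
    using convex_on_affine_comp[of "\<lambda>x. x" mu 0] by (simp add: convex_on_ident)
  moreover have "convex_on UNIV (\<lambda>z. ln a + ln (exprel (- (a / lam) * z + a / lam)))"
    by (rule convex_on_add[OF _ convex_on_affine_comp[OF convex_on_ln_exprel]])
       (simp add: convex_on_const)
  ultimately show ?thesis
    using assms by (simp add: convex_on_add convex_on_cmul)
qed

lemma f_prop_eq_linear_iff:
  assumes "a > 0" "lam > 0"
  shows "f_prop mu a lam z = mu * z \<longleftrightarrow> exprel (a / lam * (1 - z)) = 1 / a"
proof -
  have "f_prop mu a lam z = mu * z \<longleftrightarrow> ln (a * exprel (a / lam * (1 - z))) = 0"
    using assms by (simp add: f_prop_eq)
  also have "\<dots> \<longleftrightarrow> exprel (a / lam * (1 - z)) = 1 / a"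
    using assms exprel_pos[of "a / lam * (1 - z)"] by (auto simp: field_simps)
  finally show ?thesis .
qed

theorem proposition3p1:
  fixes mu a lam :: real
  assumes "a > 1" and "lam > 0"
  shows "(\<forall>z. summable (w_term a lam z) \<and>
              f_prop mu a lam z = mu * z + lam * ln (w_prop a lam z))
       \<and> C_infinity (f_prop mu a lam)
       \<and> convex_on UNIV (f_prop mu a lam)
       \<and> (\<exists>!H. f_prop mu a lam H = mu * H)
       \<and> (\<forall>H. f_prop mu a lam H = mu * H \<longrightarrow> 1 < H \<and> H < 1 + lam)"
proof -
  have a: "a > 0" using assms by simp
  define c where "c = a / lam"
  have c: "c > 0" using a assms by (simp add: c_def)
  obtain v where v: "-a < v" "v < 0" "exprel v = 1 / a"
    using exprel_attains[of "1 / a"] assms by auto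
  have root_iff: "f_prop mu a lam H = mu * H \<longleftrightarrow> H = 1 - v / c" for H
  proof -
    have "f_prop mu a lam H = mu * H \<longleftrightarrow> exprel (c * (1 - H)) = exprel v"
      using f_prop_eq_linear_iff[OF a assms(2)] v by (simp add: c_def)
    also have "\<dots> \<longleftrightarrow> H = 1 - v / c"
      using strict_mono_eq[OF strict_mono_exprel] c by (auto simp: field_simps)
    finally show ?thesis .
  qed
  have "lam * (a + v) > 0"
    using v assms by simp
  then have "1 - v / c < 1 + lam"
    using v assms c by (simp add: c_def field_simps algebra_simps)
  then show ?thesis
    using w_prop_eq[OF assms(2)] f_prop_eq[OF a assms(2)] root_iff v c
      C_infinity_f_prop[OF a assms(2)] convex_on_f_prop[OF a assms(2)]
    by (auto simp: divide_neg_pos)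
qed

end
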